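(* For every $n\ge1$, the Zimin word $Z_n$ is an involutory isoterm relative to $\mathcal{K}_3^\rho$. That is, if $w$ is an involutory word such that the identity $Z_n\approx w$ holds in $\mathcal{K}_3^\rho$, then $w=Z_n$.
   Context: $\mathcal{K}_3$ is the monoid presented by generators $c,h_1,h_2$ and relations $h_1h_2h_1=h_1$, $h_2h_1h_2=h_2$, and $h_i^2=ch_i=h_ic$ for $i=1,2$. $\mathcal{K}_3^\rho$ is $\mathcal{K}_3$ regarded as an involution semigroup under the rotation ${}^\rho$, which is the unique involutory anti-automorphism fixing $c$ and swapping $h_1\leftrightarrow h_2$. Zimin words are defined by $Z_1=x_1$ and $Z_{n+1}=Z_nx_{n+1}Z_n$. Involutory words over $X$ are elements of the free semigroup on $X\cup\{x^\star\mid x\in X\}$, with involution $(x_1\cdots x_m)^\star=x_m^\star\cdots x_1^\star$ and $(x^\star)^\star=x$; an identity $u\approx v$ between involutory words holds in $\mathcal{K}_3^\rho$ if both sides agree under every assignment of elements to letters, with $x^\star$ interpreted via ${}^\rho$. *)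

theory Defs
  imports Main
begin

text \<open>Generators c, h1, h2. Elements of the free monoid are lists of generators;
K_3 is the quotient of the free monoid by the congruence generated by the defining
relations.\<close>

datatype gen = C | H1 | H2

inductive krel :: "gen list \<Rightarrow> gen list \<Rightarrow> bool" where
  "krel [H1, H2, H1] [H1]"
| "krel [H2, H1, H2] [H2]"
| "krel [H1, H1] [C, H1]"
| "krel [C, H1] [H1, C]"
| "krel [H2, H2] [C, H2]"
| "krel [C, H2] [H2, C]"

inductive kstep :: "gen list \<Rightarrow> gen list \<Rightarrow> bool" where
  "krel l r \<Longrightarrow> kstep (p @ l @ q) (p @ r @ q)"

definition keq :: "gen list \<Rightarrow> gen list \<Rightarrow> bool" where
  "keq = equivclp kstep"

fun swap_gen :: "gen \<Rightarrow> gen" where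
  "swap_gen C = C" | "swap_gen H1 = H2" | "swap_gen H2 = H1"

definition rho :: "gen list \<Rightarrow> gen list" where
  "rho w = rev (map swap_gen w)"

datatype 'a ilet = Pos 'a | Star 'a

definition iword :: "'a ilet list \<Rightarrow> bool" where
  "iword w \<longleftrightarrow> w \<noteq> []"

text \<open>Value of an involutory word in K_3^rho under an assignment of elements
(given by representative words) to letters.\<close>
definition keval :: "('a \<Rightarrow> gen list) \<Rightarrow> 'a ilet list \<Rightarrow> gen list" where
  "keval \<sigma> w = concat (map (\<lambda>l. case l of Pos x \<Rightarrow> \<sigma> x | Star x \<Rightarrow> rho (\<sigma> x)) w)"

definition holds_K3rho :: "'a ilet list \<Rightarrow> 'a ilet list \<Rightarrow> bool" where
  "holds_K3rho u v \<longleftrightarrow> (\<forall>\<sigma>. keq (keval \<sigma> u) (keval \<sigma> v))"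

fun zimin :: "nat \<Rightarrow> nat ilet list" where
  "zimin 0 = []"
| "zimin (Suc n) = zimin n @ [Pos (Suc n)] @ zimin n"

end

theory Submission
  imports Defs
begin

(* Identities of K_3^rho are tested through a finite-information
   quotient M of K_3: an element of M records the number of occurrences of c
   (plus one for every adjacent repeated h-generator) together with the first and
   last h-generator.  Three families of substitutions into M then show that if
   u is a star-free word in the letters x_1, x_2, ... and u ~ w holds, then
   (a) every letter occurs in w as often as in u and never starred (x_y -> c,
       x_y -> h1, other letters -> 1), and
   (b) if u = x_1 u_1 x_1 u_2 ... u_m x_1 with x_1 not among the u_i, then w has
       the same shape (x_1 -> h1, other letters -> h2, which forces alternation).
   Erasing x_1 (x_1 -> 1) shows that the identity remains true for the words
   obtained by deleting x_1 and shifting the remaining letters down.  Since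
   Z_(n+1) arises from Z_n by exactly this insertion of x_1, induction on n
   shows that every Zimin word is an isoterm. *)

text \<open>Elements of M: (k, None) stands for c^k, and (k, Some (i, j)) for c^k times a
  product of h-generators starting with i and ending with j (True = h1, False = h2).\<close>

type_synonym M = "nat \<times> (bool \<times> bool) option"

fun mult :: "M \<Rightarrow> M \<Rightarrow> M" where
  "mult (k1, None) (k2, s) = (k1 + k2, s)"
| "mult (k1, s) (k2, None) = (k1 + k2, s)"
| "mult (k1, Some (i, j)) (k2, Some (p, q)) =
     (k1 + k2 + (if j = p then 1 else 0), Some (i, q))"

lemma option_pair_cases: obtains "s = None" | i j where "s = Some (i, j)"
  by (cases s) auto

lemma mult_assoc: "mult (mult a b) c = mult a (mult b c)"
proof -
  obtain k1 s1 k2 s2 k3 s3 where "a = (k1, s1)" "b = (k2, s2)" "c = (k3, s3)"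
    by (metis prod.exhaust)
  then show ?thesis
    by (cases s1 rule: option_pair_cases; cases s2 rule: option_pair_cases;
        cases s3 rule: option_pair_cases) auto
qed

fun gen_val :: "gen \<Rightarrow> M" where
  "gen_val C = (1, None)"
| "gen_val H1 = (0, Some (True, True))"
| "gen_val H2 = (0, Some (False, False))"

definition ev :: "gen list \<Rightarrow> M" where
  "ev l = foldr (\<lambda>g acc. mult (gen_val g) acc) l (0, None)"

lemma mult_unit_left [simp]: "mult (0, None) a = a"
  by (cases a) auto

lemma ev_simps [simp]: "ev [] = (0, None)" "ev (g # l) = mult (gen_val g) (ev l)"
  by (simp_all add: ev_def)

lemma ev_append [simp]: "ev (u @ v) = mult (ev u) (ev v)"
  by (induction u) (simp_all add: mult_assoc)

text \<open>The defining relations of K_3 hold in M, so ev is constant on K_3-classes.\<close>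

lemma kstep_ev: "kstep l r \<Longrightarrow> ev l = ev r"
  by (induction rule: kstep.induct) (auto elim: krel.cases)

lemma keq_ev:
  assumes "keq u v"
  shows "ev u = ev v"
proof -
  have "(symclp kstep)\<^sup>*\<^sup>* u v" using assms by (simp add: keq_def equivclp_def)
  then show ?thesis
    by (induction rule: rtranclp_induct) (auto simp: symclp_def dest: kstep_ev)
qed

lemma holds_ev: "holds_K3rho u w \<Longrightarrow> ev (keval \<sigma> u) = ev (keval \<sigma> w)"
  unfolding holds_K3rho_def using keq_ev by blast

definition hgen :: "bool \<Rightarrow> gen" where
  "hgen b = (if b then H1 else H2)"

fun adj :: "bool list \<Rightarrow> nat" where
  "adj [] = 0"
| "adj [b] = 0"
| "adj (b # c # r) = (if b = c then 1 else 0) + adj (c # r)"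

lemma ev_replicate_C: "ev (replicate k C) = (k, None)"
  by (induction k) auto

lemma ev_hgen: "bs \<noteq> [] \<Longrightarrow> ev (map hgen bs) = (adj bs, Some (hd bs, last bs))"
  by (induction bs rule: adj.induct) (auto simp: hgen_def)

lemma adj_le: "adj bs \<le> length bs - 1"
  by (induction bs rule: adj.induct) auto

lemma adj_max_iff: "adj bs = length bs - 1 \<longleftrightarrow> set bs \<subseteq> {hd bs}"
proof (induction bs rule: adj.induct)
  case (3 b c r)
  have "adj (c # r) \<le> length r" using adj_le[of "c # r"] by simp
  then have "adj (b # c # r) = length (b # c # r) - 1 \<longleftrightarrow>
      b = c \<and> adj (c # r) = length (c # r) - 1"
    by auto
  then show ?case using "3.IH" by auto
qed auto

lemma alternating_cases:
  assumes "ev (map hgen bs) = (0, Some (True, True))"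
  obtains "bs = [True]"
  | cs where "bs = True # False # cs" "ev (map hgen cs) = (0, Some (True, True))"
proof -
  have "bs \<noteq> []" using assms by auto
  then have bs: "adj bs = 0" "hd bs" "last bs" using ev_hgen assms by auto
  show thesis
  proof (cases bs rule: adj.cases)
    case (2 b)
    then show thesis using bs that(1) by simp
  next
    case (3 b c cs)
    have "cs \<noteq> []" using bs 3 by (auto split: if_splits)
    then have "c = False" "adj cs = 0" "hd cs" "last cs"
      using bs 3 by (cases cs; auto split: if_splits)+
    then show thesis using that(2) 3 bs ev_hgen[OF \<open>cs \<noteq> []\<close>] by simp
  qed (use \<open>bs \<noteq> []\<close> in simp)
qed

fun proj :: "nat \<Rightarrow> nat ilet list \<Rightarrow> bool list" where
  "proj y [] = []"
| "proj y (Pos x # l) = (if x = y then True # proj y l else proj y l)"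
| "proj y (Star x # l) = (if x = y then False # proj y l else proj y l)"

text \<open>Under x_1 -> h1 and every other letter -> h2 (so that, via the rotation,
  x_1^* -> h2 and the other starred letters -> h1), a letter evaluates to h1 exactly
  when h1_mark holds for it.\<close>

fun h1_mark :: "nat ilet \<Rightarrow> bool" where
  "h1_mark (Pos x) = (x = 1)"
| "h1_mark (Star x) = (x \<noteq> 1)"

lemma keval_Nil [simp]: "keval \<sigma> [] = []"
  and keval_Cons [simp]:
    "keval \<sigma> (l # u) = (case l of Pos x \<Rightarrow> \<sigma> x | Star x \<Rightarrow> rho (\<sigma> x)) @ keval \<sigma> u"
  and keval_append [simp]: "keval \<sigma> (u @ v) = keval \<sigma> u @ keval \<sigma> v"
  by (simp_all add: keval_def)

lemma keval_count: "keval (\<lambda>x. if x = y then [C] else []) w = replicate (length (proj y w)) C"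
  by (induction w) (auto simp: rho_def split: ilet.splits)

lemma keval_occurrences: "keval (\<lambda>x. if x = y then [H1] else []) w = map hgen (proj y w)"
  by (induction w rule: proj.induct) (auto simp: rho_def hgen_def)

lemma keval_marks: "keval (\<lambda>x. if x = 1 then [H1] else [H2]) w = map hgen (map h1_mark w)"
  by (induction w) (auto simp: rho_def hgen_def split: ilet.splits)

lemma occurrences_preserved:
  assumes holds: "holds_K3rho u w" and unstarred: "set (proj y u) \<subseteq> {True}"
  shows "proj y w = proj y u"
proof -
  let ?p = "proj y u" and ?q = "proj y w"
  have len: "length ?q = length ?p"
    using holds_ev[OF holds, of "\<lambda>x. if x = y then [C] else []"]
    by (simp add: keval_count ev_replicate_C)
  have val: "ev (map hgen ?q) = ev (map hgen ?p)"
    using holds_ev[OF holds, of "\<lambda>x. if x = y then [H1] else []"]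
    by (simp add: keval_occurrences)
  show ?thesis
  proof (cases "?p = []")
    case False
    have "hd ?p" "last ?p" using False unstarred hd_in_set last_in_set by blast+
    then have "ev (map hgen ?p) = (length ?p - 1, Some (True, True))"
      using ev_hgen[OF False] adj_max_iff[of ?p] unstarred by simp
    moreover have "?q \<noteq> []" using False len by auto
    ultimately have "adj ?q = length ?q - 1" "hd ?q"
      using val len ev_hgen[of ?q] by auto
    then have "set ?q \<subseteq> {True}" using adj_max_iff[of ?q] by simp
    then have "?q = replicate (length ?q) True" "?p = replicate (length ?p) True"
      using unstarred by (auto intro!: replicate_length_same[symmetric])
    then show ?thesis using len by metis
  qed (use len in simp)
qed

definition plain :: "nat ilet list \<Rightarrow> bool" where
  "plain w \<longleftrightarrow> (\<forall>l\<in>set w. \<exists>k. l = Pos (Suc k))"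

lemma plain_iff_proj: "plain w \<longleftrightarrow> proj 0 w = [] \<and> (\<forall>y. set (proj y w) \<subseteq> {True})"
proof (induction w)
  case (Cons a w)
  show ?case
  proof (cases a)
    case (Pos k)
    have "(\<forall>y. set (proj y (Pos k # w)) \<subseteq> {True}) \<longleftrightarrow> (\<forall>y. set (proj y w) \<subseteq> {True})"
      by auto
    then show ?thesis using Cons.IH Pos by (auto simp: plain_def gr0_conv_Suc)
  next
    case (Star k)
    have "False \<in> set (proj k (Star k # w))" by simp
    then show ?thesis using Star by (auto simp: plain_def)
  qed
qed (simp add: plain_def)

lemma plain_preserved:
  assumes "holds_K3rho u w" and "plain u"
  shows "plain w"
proof -
  have "proj y w = proj y u" for y
    using assms occurrences_preserved plain_iff_proj by blast
  then show ?thesis using assms(2) by (simp add: plain_iff_proj)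
qed

fun insert_x1 :: "nat ilet list \<Rightarrow> nat ilet list" where
  "insert_x1 [] = [Pos 1]"
| "insert_x1 (a # v) = Pos 1 # map_ilet Suc a # insert_x1 v"

lemma insert_x1_append:
  "insert_x1 (u @ a # v) = insert_x1 u @ map_ilet Suc a # insert_x1 v"
  by (induction u) auto

lemma plain_insert_x1: "plain v \<Longrightarrow> plain (insert_x1 v)"
  by (induction v) (auto simp: plain_def)

lemma marks_insert_x1:
  "plain u \<Longrightarrow> ev (map hgen (map h1_mark (insert_x1 u))) = (0, Some (True, True))"
  by (induction u) (auto simp: plain_def hgen_def)

lemma alternating_insert_x1:
  "plain w \<Longrightarrow> ev (map hgen (map h1_mark w)) = (0, Some (True, True)) \<Longrightarrow>
    \<exists>v. plain v \<and> w = insert_x1 v"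
proof (induction w rule: induct_list012)
  case (2 x)
  then have "x = Pos 1" by (auto simp: plain_def hgen_def split: if_splits)
  then show ?case by (auto simp: plain_def intro: exI[of _ "[]"])
next
  case (3 x y zs)
  from "3.prems"(2) obtain "h1_mark x" "\<not> h1_mark y"
      "ev (map hgen (map h1_mark zs)) = (0, Some (True, True))"
    by (rule alternating_cases) auto
  moreover have "plain zs" using "3.prems"(1) by (simp add: plain_def)
  ultimately obtain v where "plain v" "zs = insert_x1 v" using "3.IH"(1) by blast
  moreover obtain k j where "x = Pos (Suc k)" "y = Pos (Suc j)"
    using "3.prems"(1) by (auto simp: plain_def)
  ultimately have "plain (Pos j # v)" "x # y # zs = insert_x1 (Pos j # v)"
    using \<open>h1_mark x\<close> \<open>\<not> h1_mark y\<close> by (auto simp: plain_def gr0_conv_Suc)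
  then show ?case by blast
qed (simp add: hgen_def)

lemma keval_insert_x1:
  "plain v \<Longrightarrow> keval (\<lambda>k. if k = 1 then [] else \<sigma> (k - 1)) (insert_x1 v) = keval \<sigma> v"
  by (induction v) (auto simp: plain_def)

lemma holds_erase_x1:
  assumes "plain u" "plain v" "holds_K3rho (insert_x1 u) (insert_x1 v)"
  shows "holds_K3rho u v"
  unfolding holds_K3rho_def
proof
  fix \<sigma> :: "nat \<Rightarrow> gen list"
  show "keq (keval \<sigma> u) (keval \<sigma> v)"
    using assms(3) keval_insert_x1[OF assms(1)] keval_insert_x1[OF assms(2)]
    unfolding holds_K3rho_def by metis
qed

lemma holds_insert_x1:
  assumes "plain u" and holds: "holds_K3rho (insert_x1 u) w"
  shows "\<exists>v. plain v \<and> w = insert_x1 v \<and> holds_K3rho u v"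
proof -
  have "plain w" using plain_preserved[OF holds plain_insert_x1[OF \<open>plain u\<close>]] .
  moreover have "ev (map hgen (map h1_mark w)) = (0, Some (True, True))"
    using holds_ev[OF holds, of "\<lambda>x. if x = 1 then [H1] else [H2]"]
      marks_insert_x1[OF \<open>plain u\<close>] unfolding keval_marks by simp
  ultimately obtain v where "plain v" "w = insert_x1 v"
    using alternating_insert_x1 by blast
  then show ?thesis using holds_erase_x1[OF \<open>plain u\<close>] holds by blast
qed

lemma zimin_insert_x1: "zimin (Suc n) = insert_x1 (zimin n)"
proof (induction n)
  case (Suc n)
  have "zimin (Suc (Suc n)) = zimin (Suc n) @ Pos (Suc (Suc n)) # zimin (Suc n)"
    by (subst zimin.simps(2)) simp
  also have "\<dots> = insert_x1 (zimin n) @ Pos (Suc (Suc n)) # insert_x1 (zimin n)"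
    by (simp only: Suc.IH)
  also have "\<dots> = insert_x1 (zimin (Suc n))"
    by (simp add: insert_x1_append)
  finally show ?case .
qed simp

lemma plain_zimin: "plain (zimin n)"
  by (induction n) (auto simp: plain_def)

text \<open>The empty word is an isoterm: every letter of w would occur in the empty word.\<close>

lemma empty_isoterm:
  fixes w :: "nat ilet list"
  assumes "holds_K3rho [] w"
  shows "w = []"
proof (rule ccontr)
  assume "w \<noteq> []"
  then obtain a w' where w: "w = a # w'" by (cases w) auto
  obtain y where "a = Pos y \<or> a = Star y" by (cases a) auto
  then have "proj y w \<noteq> []" using w by auto
  moreover have "proj y w = proj y []" using occurrences_preserved[OF assms] by simp
  ultimately show False by simp
qed

lemma zimin_isoterm: "holds_K3rho (zimin n) w \<Longrightarrow> w = zimin n"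
proof (induction n arbitrary: w)
  case 0
  then show ?case using empty_isoterm by simp
next
  case (Suc n)
  then obtain v where "w = insert_x1 v" "holds_K3rho (zimin n) v"
    using holds_insert_x1[OF plain_zimin] zimin_insert_x1 by metis
  then show ?case using Suc.IH zimin_insert_x1 by metis
qed

theorem mainTheorem9:
  fixes n :: nat and w :: "nat ilet list"
  assumes "n \<ge> 1" and "iword w" and "holds_K3rho (zimin n) w"
  shows "w = zimin n"
  using zimin_isoterm assms(3) .

end
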